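(* Consider the two-mode switched system $\dot x=f_1(x)+g(x)u$ if $q(x)\ge0$, $\dot x=f_2(x)+g(x)u$ if $q(x)\le0$, $y=h(x)$, with $f_1,f_2\in\mathcal{C}^1(\mathbb{R}^n,\mathbb{R}^n)$, $g\in\mathcal{C}^1(\mathbb{R}^n,\mathbb{R}^{n\times m})$, $h\in\mathcal{C}^1(\mathbb{R}^n,\mathbb{R}^p)$, $q\in\mathcal{C}^1(\mathbb{R}^n,\mathbb{R})$ such that $\{X_1:=\{q\ge0\},\mathbb{R}^n\},\{X_2:=\{q\le0\},\mathbb{R}^n\}$ form a proper partition of $\mathbb{R}^n$, $q(0)\ge0\Rightarrow f_1(0)=0$, $q(0)\le0\Rightarrow f_2(0)=0$, $\|g(x)\|\le\beta_g(|x|)$ for some $\beta_g\in\mathcal{C}(\mathbb{R},\mathbb{R}_+)$, and $|f_1(x)-f_2(x)|\le\beta_f(|x|)$ for some $\beta_f\in\mathcal{K}_\infty$. Let $\ell_1,\ell_2\in\mathcal{C}^1(\mathbb{R}^p,\mathbb{R}^n)$, $k:\mathbb{R}^n\to\mathbb{R}^m$ globally Lipschitz, $\widetilde g(x,z):=(g(x)-g(z))k(z)$, and let $F_e$ be the error map defined in the context. Suppose there exist $V_e\in\mathcal{C}^1(\mathbb{R}^n,\mathbb{R})$ and $\underline\psi_e,\overline\psi_e,\alpha_e,\rho_e\in\mathcal{K}_\infty$ such that $\underline\psi_e(|e|)\le V_e(e)\le\overline\psi_e(|e|)$ and $|\frac{\partial V_e}{\partial e}(e)|\le\rho_e(|e|)$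 for all $e$; for all $x,z\in\mathbb{R}^n$ and each $i\in\{1,2\}$, with $e=x-z$, $$\Big\langle\frac{\partial V_e}{\partial e}(e),\,f_i(x)-f_i(z)-\ell_i(h(x)-h(z))+\widetilde g(x,z)\Big\rangle\le-\alpha_e(|e|);$$ and there is $\theta_e\in\mathcal{K}_\infty$ with $\theta_e(s)\le\alpha_e(s)/\rho_e(s)$ for all $s\ge0$. Then there exist $\widehat\gamma_e\in\mathcal{K}$ and $\widehat\alpha_e\in\mathcal{K}_\infty$ such that for all $x,e\in\mathbb{R}^n$, $|e|\ge\widehat\gamma_e(|x|)\Rightarrow\langle\frac{\partial V_e}{\partial e}(e),f_e\rangle\le-\widehat\alpha_e(|e|)$ for all $f_e\in F_e(x,e)$; consequently the system $\dot e\in F_e(x,e)$ is ISS with respect to $x$.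
   Context: Proper partition $\{X_i,\mathcal{O}_i\}$: closed $X_i$, open $\mathcal{O}_i\supseteq X_i$, $\bigcup X_i=\mathbb{R}^n$, $\overline{\operatorname{int}X_i}=X_i$, $\operatorname{bd}X_i$ of measure zero, $X_i\cap X_j=\operatorname{bd}X_i\cap\operatorname{bd}X_j$ for $i\neq j$. With $z=x-e$, the discontinuous error vector field $f_e(x,e)$ equals $f_1(x)-f_1(z)-\ell_1(h(x)-h(z))+\widetilde g(x,z)$ if $q(x)\ge0,q(z)\ge0$; $f_2(x)-f_1(z)-\ell_1(h(x)-h(z))+\widetilde g(x,z)$ if $q(x)\le0,q(z)\ge0$; $f_1(x)-f_2(z)-\ell_2(h(x)-h(z))+\widetilde g(x,z)$ if $q(x)\ge0,q(z)\le0$; $f_2(x)-f_2(z)-\ell_2(h(x)-h(z))+\widetilde g(x,z)$ if $q(x)\le0,q(z)\le0$ (at points where several cases apply, all applicable expressions are admitted). $F_e(x,e)$ is the Filippov regularization of this map (in the state $e$, with $x$ as input): $F_e(x,e)=\bigcap_{\delta>0}\bigcap_{\mu(S)=0}\overline{\operatorname{co}}\{f_e(x,e'):e'\in B(e,\delta)\setminus S\}$, $\mu$ Lebesgue measure. ISS w.r.t. $x$: for every measurable locally essentially bounded $x(\cdot)$, all Carathéodory solutions satisfy $|e(t)|\le\beta(|e(0)|,t)+\chi(\operatorname{ess\,sup}_{[0,t]}|x|)$ for some $\beta\in\mathcal{KL}$, $\chi\in\mathcal{K}$. *)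

theory Defs
  imports "HOL-Analysis.Analysis"
begin

definition C1_map :: "('a::real_normed_vector \<Rightarrow> 'b::real_normed_vector) \<Rightarrow> bool" where
  "C1_map f \<longleftrightarrow> (\<exists>f'. (\<forall>x. (f has_derivative blinfun_apply (f' x)) (at x)) \<and> continuous_on UNIV f')"

definition class_K :: "(real \<Rightarrow> real) \<Rightarrow> bool" where
  "class_K a \<longleftrightarrow> continuous_on {0..} a \<and> a 0 = 0 \<and> strict_mono_on {0..} a"

definition class_Kinf :: "(real \<Rightarrow> real) \<Rightarrow> bool" where
  "class_Kinf a \<longleftrightarrow> class_K a \<and> filterlim a at_top at_top"

definition class_KL :: "(real \<Rightarrow> real \<Rightarrow> real) \<Rightarrow> bool" where
  "class_KL b \<longleftrightarrow> (\<forall>t\<ge>0. class_K (\<lambda>s. b s t)) \<and>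
     (\<forall>s\<ge>0. antimono_on {0..} (\<lambda>t. b s t) \<and> ((\<lambda>t. b s t) \<longlongrightarrow> 0) at_top)"

definition proper_partition :: "'i set \<Rightarrow> ('i \<Rightarrow> 'a::euclidean_space set) \<Rightarrow> ('i \<Rightarrow> 'a set) \<Rightarrow> bool" where
  "proper_partition I X Op \<longleftrightarrow>
     (\<forall>i\<in>I. closed (X i) \<and> open (Op i) \<and> X i \<subseteq> Op i \<and> closure (interior (X i)) = X i
             \<and> negligible (frontier (X i))) \<and>
     (\<Union>i\<in>I. X i) = UNIV \<and>
     (\<forall>i\<in>I. \<forall>j\<in>I. i \<noteq> j \<longrightarrow> X i \<inter> X j = frontier (X i) \<inter> frontier (X j))"

text \<open>\<open>g~(x,z) = (g(x) - g(z)) k(z)\<close>; matrices \<open>real^'m^'n\<close> are n-by-m.\<close>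
definition gtilde :: "(real^'n::finite \<Rightarrow> real^'m::finite^'n) \<Rightarrow> (real^'n \<Rightarrow> real^'m)
     \<Rightarrow> real^'n \<Rightarrow> real^'n \<Rightarrow> real^'n" where
  "gtilde g k x z = (g x - g z) *v k z"

text \<open>The (multi-valued) discontinuous error vector field \<open>f_e(x,e)\<close>, with \<open>z = x - e\<close>;
  at points where several cases apply, all applicable expressions are admitted.\<close>
definition fe_set ::
  "(real^'n::finite \<Rightarrow> real^'n) \<Rightarrow> (real^'n \<Rightarrow> real^'n) \<Rightarrow> (real^'n \<Rightarrow> real^'m::finite^'n)
   \<Rightarrow> (real^'n \<Rightarrow> real) \<Rightarrow> (real^'n \<Rightarrow> real^'p::finite) \<Rightarrow> (real^'p \<Rightarrow> real^'n) \<Rightarrow> (real^'p \<Rightarrow> real^'n)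
   \<Rightarrow> (real^'n \<Rightarrow> real^'m) \<Rightarrow> real^'n \<Rightarrow> real^'n \<Rightarrow> (real^'n) set" where
  "fe_set f1 f2 g q h l1 l2 k x e =
    (let z = x - e in
     {v. (q x \<ge> 0 \<and> q z \<ge> 0 \<and> v = f1 x - f1 z - l1 (h x - h z) + gtilde g k x z) \<or>
         (q x \<le> 0 \<and> q z \<ge> 0 \<and> v = f2 x - f1 z - l1 (h x - h z) + gtilde g k x z) \<or>
         (q x \<ge> 0 \<and> q z \<le> 0 \<and> v = f1 x - f2 z - l2 (h x - h z) + gtilde g k x z) \<or>
         (q x \<le> 0 \<and> q z \<le> 0 \<and> v = f2 x - f2 z - l2 (h x - h z) + gtilde g k x z)})"

definition filippov :: "('a::euclidean_space \<Rightarrow> 'b::euclidean_space set) \<Rightarrow> 'a \<Rightarrow> 'b set" where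
  "filippov F e = (\<Inter>\<delta>\<in>{0<..}. \<Inter>S\<in>{S. negligible S}.
      closure (convex hull (\<Union>e'\<in>ball e \<delta> - S. F e')))"

definition Fe where
  "Fe f1 f2 g q h l1 l2 k x = filippov (fe_set f1 f2 g q h l1 l2 k x)"

definition ess_sup_norm :: "(real \<Rightarrow> 'a::real_normed_vector) \<Rightarrow> real \<Rightarrow> real" where
  "ess_sup_norm x t = Inf {c. c \<ge> 0 \<and> (\<exists>N. negligible N \<and> (\<forall>s\<in>{0..t} - N. norm (x s) \<le> c))}"

definition loc_ess_bounded :: "(real \<Rightarrow> 'a::real_normed_vector) \<Rightarrow> bool" where
  "loc_ess_bounded x \<longleftrightarrow> (\<forall>t\<ge>0. \<exists>c. \<exists>N. negligible N \<and> (\<forall>s\<in>{0..t} - N. norm (x s) \<le> c))"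

text \<open>Caratheodory solution of \<open>e' \<in> F(x(t), e)\<close> on \<open>[0,T]\<close>: absolutely continuous,
  i.e. an indefinite Lebesgue integral, with derivative in \<open>F\<close> almost everywhere.\<close>
definition carath_solution ::
  "('x \<Rightarrow> 'a::euclidean_space \<Rightarrow> 'a set) \<Rightarrow> (real \<Rightarrow> 'x) \<Rightarrow> real \<Rightarrow> (real \<Rightarrow> 'a) \<Rightarrow> bool" where
  "carath_solution F x T e \<longleftrightarrow> T > 0 \<and> (\<exists>v. v absolutely_integrable_on {0..T} \<and>
     (\<forall>t\<in>{0..T}. e t = e 0 + integral {0..t} v) \<and>
     (\<exists>N. negligible N \<and> (\<forall>t\<in>{0..T} - N. v t \<in> F (x t) (e t))))"

definition ISS_wrt_input :: "('x::euclidean_space \<Rightarrow> 'a::euclidean_space \<Rightarrow> 'a set) \<Rightarrow> bool" where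
  "ISS_wrt_input F \<longleftrightarrow> (\<exists>\<beta> chi. class_KL \<beta> \<and> class_K chi \<and>
     (\<forall>x. x \<in> borel_measurable (lebesgue_on {0..}) \<longrightarrow> loc_ess_bounded x \<longrightarrow>
       (\<forall>T e. carath_solution F x T e \<longrightarrow>
          (\<forall>t\<in>{0..T}. norm (e t) \<le> \<beta> (norm (e 0)) t + chi (ess_sup_norm x t)))))"

end

theory Submission
  imports Defs
begin

(* Of the four expressions defining the error vector field, the two in which x and
   its estimate z = x - e lie in the same mode are exactly those of the decrease conditions, so
   their inner product with dVe(e) is at most -alpha_e(|e|); the two mixed ones differ from them
   by +-(f1(x) - f2(x)), which costs at most rho_e(|e|) beta_f(|x|).  This is at most
   alpha_e(|e|)/2 once |e| >= theta_e^-1(2 beta_f(|x|)).  All four expressions are continuous in e,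
   so the bound survives the closed convex hulls of the Filippov regularization, and Ve is an
   ISS-Lyapunov function.  Along an absolutely continuous solution, Ve decreases at the rate
   alpha(psi_u^-1(L)) as long as it stays above a level L >= psi_u(gamma(|x|_inf)); comparing with
   the solution u of u + t alpha(psi_u^-1(u)) = psi_u(|e(0)|) gives the KL term of the ISS estimate,
   and the level psi_u(gamma(|x|_inf)) gives its gain. *)

section \<open>Comparison functions\<close>

lemma class_Kinf_class_K: "class_Kinf a \<Longrightarrow> class_K a"
  by (simp add: class_Kinf_def)

lemma class_K_le_iff: "class_K a \<Longrightarrow> 0 \<le> x \<Longrightarrow> 0 \<le> y \<Longrightarrow> a x \<le> a y \<longleftrightarrow> x \<le> y"
  unfolding class_K_def using strict_mono_on_less_eq[of "{0..}" a x y] by simp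

lemma class_K_less_iff: "class_K a \<Longrightarrow> 0 \<le> x \<Longrightarrow> 0 \<le> y \<Longrightarrow> a x < a y \<longleftrightarrow> x < y"
  unfolding class_K_def using strict_mono_on_less[of "{0..}" a x y] by simp

lemma class_K_mono: "class_K a \<Longrightarrow> 0 \<le> x \<Longrightarrow> x \<le> y \<Longrightarrow> a x \<le> a y"
  using class_K_le_iff[of a x y] by simp

lemma class_K_nonneg: "class_K a \<Longrightarrow> 0 \<le> s \<Longrightarrow> 0 \<le> a s"
  using class_K_mono[of a 0 s] by (simp add: class_K_def)

lemma class_K_pos: "class_K a \<Longrightarrow> 0 < s \<Longrightarrow> 0 < a s"
  using class_K_less_iff[of a 0 s] by (simp add: class_K_def)

lemma class_K_compose:
  assumes "class_K a" "class_K b"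
  shows "class_K (\<lambda>s. a (b s))"
proof -
  have b_nonneg: "b ` {0..} \<subseteq> {0..}"
    using class_K_nonneg[OF assms(2)] by auto
  have "continuous_on {0..} (\<lambda>s. a (b s))"
    using assms b_nonneg unfolding class_K_def by (blast intro: continuous_on_compose2)
  moreover have "strict_mono_on {0..} (\<lambda>s. a (b s))"
    using assms b_nonneg unfolding class_K_def strict_mono_on_def by blast
  ultimately show ?thesis
    using assms by (simp add: class_K_def)
qed

lemma class_K_cmult: "class_K a \<Longrightarrow> 0 < c \<Longrightarrow> class_K (\<lambda>s. c * a s)"
  unfolding class_K_def by (auto intro!: continuous_intros simp: strict_mono_on_def)

lemma class_Kinf_cmult: "class_Kinf a \<Longrightarrow> 0 < c \<Longrightarrow> class_Kinf (\<lambda>s. c * a s)"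
  unfolding class_Kinf_def
  by (auto intro: class_K_cmult filterlim_tendsto_pos_mult_at_top)

lemma class_Kinf_bij_betw:
  assumes "class_Kinf a"
  shows "bij_betw a {0..} {0..}"
proof (rule bij_betw_imageI)
  have K: "class_K a"
    using assms by (rule class_Kinf_class_K)
  then show "inj_on a {0..}"
    by (simp add: class_K_def strict_mono_on_imp_inj_on)
  show "a ` {0..} = {0..}"
  proof
    show "a ` {0..} \<subseteq> {0..}"
      using class_K_nonneg[OF K] by auto
    show "{0..} \<subseteq> a ` {0..}"
    proof
      fix y :: real
      assume "y \<in> {0..}"
      obtain X where X: "\<And>x. X \<le> x \<Longrightarrow> y \<le> a x"
        using assms unfolding class_Kinf_def filterlim_at_top eventually_at_top_linorder by blast
      have "continuous_on {0..max X 0} a"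
        using K unfolding class_K_def by (auto intro: continuous_on_subset)
      moreover have "a 0 \<le> y" "y \<le> a (max X 0)"
        using K \<open>y \<in> {0..}\<close> X[of "max X 0"] by (auto simp: class_K_def)
      ultimately show "y \<in> a ` {0..}"
        using IVT'[of a 0 y "max X 0"] by force
    qed
  qed
qed

abbreviation inv_nonneg :: "(real \<Rightarrow> real) \<Rightarrow> real \<Rightarrow> real" where
  "inv_nonneg a \<equiv> the_inv_into {0..} a"

lemma
  assumes "class_Kinf a" "0 \<le> y"
  shows inv_nonneg_nonneg: "0 \<le> inv_nonneg a y"
    and class_Kinf_inv_nonneg_eq: "a (inv_nonneg a y) = y"
proof -
  have bij: "bij_betw a {0..} {0..}"
    using assms(1) by (rule class_Kinf_bij_betw)
  show "0 \<le> inv_nonneg a y"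
    using bij_betw_the_inv_into[OF bij] assms(2) by (auto dest: bij_betwE)
  show "a (inv_nonneg a y) = y"
    using f_the_inv_into_f_bij_betw[OF bij] assms(2) by simp
qed

lemma inv_nonneg_class_Kinf_eq: "class_Kinf a \<Longrightarrow> 0 \<le> x \<Longrightarrow> inv_nonneg a (a x) = x"
  using class_Kinf_bij_betw by (auto intro: the_inv_into_f_f simp: bij_betw_def)

lemma inv_nonneg_le_iff:
  "class_Kinf a \<Longrightarrow> 0 \<le> y \<Longrightarrow> 0 \<le> x \<Longrightarrow> inv_nonneg a y \<le> x \<longleftrightarrow> y \<le> a x"
  using class_K_le_iff[of a "inv_nonneg a y" x]
  by (simp add: class_Kinf_class_K inv_nonneg_nonneg class_Kinf_inv_nonneg_eq)

lemma le_inv_nonneg_iff: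
  "class_Kinf a \<Longrightarrow> 0 \<le> y \<Longrightarrow> 0 \<le> x \<Longrightarrow> x \<le> inv_nonneg a y \<longleftrightarrow> a x \<le> y"
  using class_K_le_iff[of a x "inv_nonneg a y"]
  by (simp add: class_Kinf_class_K inv_nonneg_nonneg class_Kinf_inv_nonneg_eq)

lemma inv_nonneg_antimono:
  assumes "class_Kinf a" "class_Kinf b" "\<And>x. 0 \<le> x \<Longrightarrow> a x \<le> b x" "0 \<le> y"
  shows "inv_nonneg b y \<le> inv_nonneg a y"
  using assms(3)[OF inv_nonneg_nonneg[OF assms(1,4)]] class_Kinf_inv_nonneg_eq[OF assms(1,4)]
    inv_nonneg_le_iff[OF assms(2,4) inv_nonneg_nonneg[OF assms(1,4)]] by simp

lemma continuous_on_inv_nonneg: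
  assumes a: "class_Kinf a"
  shows "continuous_on {0..} (inv_nonneg a)"
proof (clarsimp simp: continuous_on_eq_continuous_within)
  fix y :: real
  assume "0 \<le> y"
  define n where "n = inv_nonneg a y + 1"
  have K: "class_K a"
    using a by (rule class_Kinf_class_K)
  have n: "0 \<le> n" "y < a n"
    using \<open>0 \<le> y\<close> class_K_less_iff[OF K, of "inv_nonneg a y" n]
    by (simp_all add: n_def a inv_nonneg_nonneg class_Kinf_inv_nonneg_eq)
  have "a ` {0..n} = {0..a n}"
  proof
    show "a ` {0..n} \<subseteq> {0..a n}"
      using class_K_nonneg[OF K] class_K_mono[OF K] by auto
    show "{0..a n} \<subseteq> a ` {0..n}"
    proof
      fix w
      assume "w \<in> {0..a n}"
      then have "inv_nonneg a w \<in> {0..n}" "w = a (inv_nonneg a w)"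
        using n inv_nonneg_le_iff[OF a, of w n]
        by (simp_all add: a inv_nonneg_nonneg class_Kinf_inv_nonneg_eq)
      then show "w \<in> a ` {0..n}" by blast
    qed
  qed
  moreover have "continuous_on (a ` {0..n}) (inv_nonneg a)"
    using K by (intro continuous_on_inv)
      (auto simp: class_K_def a inv_nonneg_class_Kinf_eq intro: continuous_on_subset)
  ultimately have "continuous (at y within {0..a n}) (inv_nonneg a)"
    using \<open>0 \<le> y\<close> n by (simp add: continuous_on_eq_continuous_within)
  moreover have "at y within {0..} = at y within {0..a n}"
    by (rule at_within_nhd[of y "{..<a n}"]) (use n in auto)
  ultimately show "continuous (at y within {0..}) (inv_nonneg a)"
    by simp
qed

lemma class_Kinf_inv_nonneg:
  assumes a: "class_Kinf a"
  shows "class_Kinf (inv_nonneg a)"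
proof -
  have "strict_mono_on {0..} (inv_nonneg a)"
  proof (rule strict_mono_onI)
    fix y1 y2 :: real
    assume "y1 \<in> {0..}" "y2 \<in> {0..}" "y1 < y2"
    then show "inv_nonneg a y1 < inv_nonneg a y2"
      using class_K_less_iff[OF class_Kinf_class_K[OF a], of "inv_nonneg a y1" "inv_nonneg a y2"]
      by (simp add: a inv_nonneg_nonneg class_Kinf_inv_nonneg_eq)
  qed
  moreover have "inv_nonneg a 0 = 0"
    using inv_nonneg_class_Kinf_eq[OF a, of 0] a by (simp add: class_Kinf_def class_K_def)
  moreover have "filterlim (inv_nonneg a) at_top at_top"
    unfolding filterlim_at_top eventually_at_top_linorder
  proof
    fix Z :: real
    have "max Z 0 \<le> inv_nonneg a y" if "a (max Z 0) \<le> y" for y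
      using that le_inv_nonneg_iff[OF a, of y "max Z 0"]
        class_K_nonneg[OF class_Kinf_class_K[OF a], of "max Z 0"] by simp
    then show "\<exists>N. \<forall>y\<ge>N. Z \<le> inv_nonneg a y"
      by force
  qed
  ultimately show ?thesis
    using continuous_on_inv_nonneg[OF a] by (simp add: class_Kinf_def class_K_def)
qed

section \<open>The Filippov regularization of the error dynamics\<close>

lemma filippov_inner_le:
  fixes F :: "'a::euclidean_space \<Rightarrow> 'b::euclidean_space set"
  assumes bound: "\<And>e' v. v \<in> F e' \<Longrightarrow> D \<bullet> v \<le> \<phi> e'"
    and cont: "continuous (at e) \<phi>"
    and w: "w \<in> filippov F e"
  shows "D \<bullet> w \<le> \<phi> e"
proof (rule field_le_epsilon)
  fix \<epsilon> :: real
  assume "0 < \<epsilon>"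
  then obtain \<delta> where "0 < \<delta>" and \<delta>: "\<And>e'. dist e' e < \<delta> \<Longrightarrow> \<phi> e' < \<phi> e + \<epsilon>"
    using cont unfolding continuous_at_eps_delta dist_real_def by (metis abs_less_iff add.commute diff_less_eq)
  let ?H = "{v. D \<bullet> v \<le> \<phi> e + \<epsilon>}"
  have "(\<Union>e'\<in>ball e \<delta> - {}. F e') \<subseteq> ?H"
    using bound \<delta> by (force simp: dist_commute)
  then have "closure (convex hull (\<Union>e'\<in>ball e \<delta> - {}. F e')) \<subseteq> ?H"
    by (intro closure_minimal hull_minimal closed_halfspace_le convex_halfspace_le)
  moreover have "w \<in> closure (convex hull (\<Union>e'\<in>ball e \<delta> - {}. F e'))"
    using w \<open>0 < \<delta>\<close> unfolding filippov_def by blast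
  ultimately show "D \<bullet> w \<le> \<phi> e + \<epsilon>"
    by blast
qed

lemma continuous_on_matrix_vector_mult:
  fixes A :: "'a::topological_space \<Rightarrow> real^'m::finite^'n::finite" and b :: "'a \<Rightarrow> real^'m"
  assumes "continuous_on S A" "continuous_on S b"
  shows "continuous_on S (\<lambda>y. A y *v b y)"
  unfolding matrix_vector_mult_def
  by (intro continuous_intros continuous_on_component assms)

lemma Fe_inner_le:
  fixes f1 f2 :: "real^'n \<Rightarrow> real^'n" and g :: "real^'n \<Rightarrow> real^'m^'n"
    and h :: "real^'n \<Rightarrow> real^'p" and l1 l2 :: "real^'p \<Rightarrow> real^'n"
    and k :: "real^'n \<Rightarrow> real^'m" and dV :: "real^'n \<Rightarrow> real^'n"
  assumes cont: "continuous_on UNIV f1" "continuous_on UNIV f2" "continuous_on UNIV g"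
      "continuous_on UNIV h" "continuous_on UNIV l1" "continuous_on UNIV l2" "continuous_on UNIV k"
    and decr1: "\<And>x z. dV (x - z) \<bullet> (f1 x - f1 z - l1 (h x - h z) + gtilde g k x z) \<le> - \<alpha> (norm (x - z))"
    and decr2: "\<And>x z. dV (x - z) \<bullet> (f2 x - f2 z - l2 (h x - h z) + gtilde g k x z) \<le> - \<alpha> (norm (x - z))"
    and fe: "fe \<in> Fe f1 f2 g q h l1 l2 k x e"
  shows "dV e \<bullet> fe \<le> - \<alpha> (norm e) + norm (dV e) * norm (f1 x - f2 x)"
proof -
  define E1 where "E1 z = f1 x - f1 z - l1 (h x - h z) + gtilde g k x z" for z
  define E2 where "E2 z = f2 x - f2 z - l2 (h x - h z) + gtilde g k x z" for z
  define C where "C = norm (dV e) * norm (f1 x - f2 x)"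
  define \<phi> where "\<phi> e' = max (dV e \<bullet> E1 (x - e')) (dV e \<bullet> E2 (x - e')) + C" for e'
  have l1: "continuous_on UNIV (\<lambda>z. l1 (h x - h z))"
    and l2: "continuous_on UNIV (\<lambda>z. l2 (h x - h z))"
    by (auto intro!: continuous_on_compose2[OF cont(5)] continuous_on_compose2[OF cont(6)]
        continuous_intros cont(4))
  have gtilde: "continuous_on UNIV (\<lambda>z. gtilde g k x z)"
    unfolding gtilde_def by (intro continuous_on_matrix_vector_mult continuous_intros cont)
  have "continuous_on UNIV E1" "continuous_on UNIV E2"
    unfolding E1_def E2_def by (intro continuous_intros cont l1 l2 gtilde)+
  moreover have "continuous_on UNIV (\<lambda>e'. x - e')"
    by (intro continuous_intros)
  ultimately have "continuous_on UNIV (\<lambda>e'. E1 (x - e'))" "continuous_on UNIV (\<lambda>e'. E2 (x - e'))"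
    by (auto intro: continuous_on_compose2)
  then have "continuous_on UNIV \<phi>"
    unfolding \<phi>_def by (intro continuous_intros)
  then have \<phi>_continuous: "continuous (at e) \<phi>"
    by (simp add: continuous_on_eq_continuous_at)
  have \<phi>_bound: "dV e \<bullet> v \<le> \<phi> e'" if "v \<in> fe_set f1 f2 g q h l1 l2 k x e'" for v e'
  proof -
    \<comment> \<open>a mode mismatch between \<open>x\<close> and \<open>z\<close> costs at most \<open>C\<close>, by Cauchy--Schwarz\<close>
    have "dV e \<bullet> (f2 x - f1 x) \<le> C" "dV e \<bullet> (f1 x - f2 x) \<le> C"
      unfolding C_def
      using norm_cauchy_schwarz[of "dV e" "f2 x - f1 x"] norm_cauchy_schwarz[of "dV e" "f1 x - f2 x"]
      by (simp_all add: norm_minus_commute)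
    moreover have "v \<in> {E1 (x - e'), E1 (x - e') + (f2 x - f1 x), E2 (x - e') + (f1 x - f2 x), E2 (x - e')}"
      using that unfolding fe_set_def Let_def E1_def E2_def mem_Collect_eq
      by (elim disjE conjE) (simp_all add: algebra_simps)
    moreover have "0 \<le> C"
      by (simp add: C_def)
    ultimately show ?thesis
      unfolding \<phi>_def by (auto simp: inner_add_right)
  qed
  have "dV e \<bullet> fe \<le> \<phi> e"
    using filippov_inner_le[OF \<phi>_bound \<phi>_continuous] fe by (simp add: Fe_def)
  also have "\<phi> e \<le> - \<alpha> (norm e) + C"
    using decr1[of x "x - e"] decr2[of x "x - e"] by (simp add: \<phi>_def E1_def E2_def)
  finally show ?thesis
    by (simp add: C_def)
qed

lemma mismatch_le_half_decay:
  assumes \<theta>: "class_Kinf \<theta>" and \<rho>: "class_K \<rho>" and \<alpha>: "class_K \<alpha>"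
    and \<theta>_le: "\<And>s. 0 \<le> s \<Longrightarrow> \<theta> s \<le> \<alpha> s / \<rho> s"
    and "0 \<le> b" and r: "inv_nonneg \<theta> (2 * b) \<le> r"
  shows "\<rho> r * b \<le> \<alpha> r / 2"
proof -
  have "0 \<le> r"
    using inv_nonneg_nonneg[OF \<theta>, of "2 * b"] r \<open>0 \<le> b\<close> by simp
  then have "2 * b \<le> \<theta> r"
    using inv_nonneg_le_iff[OF \<theta>, of "2 * b" r] r \<open>0 \<le> b\<close> by simp
  show ?thesis
  proof (cases "r = 0")
    case True
    then show ?thesis
      using \<rho> \<alpha> by (simp add: class_K_def)
  next
    case False
    then have "0 < \<rho> r"
      using class_K_pos[OF \<rho>] \<open>0 \<le> r\<close> by simp
    then have "\<rho> r * (2 * b) \<le> \<rho> r * \<theta> r"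
      using \<open>2 * b \<le> \<theta> r\<close> by simp
    also have "\<dots> \<le> \<alpha> r"
      using \<theta>_le[OF \<open>0 \<le> r\<close>] \<open>0 < \<rho> r\<close> by (simp add: pos_le_divide_eq mult.commute)
    finally show ?thesis
      by simp
  qed
qed

lemma Fe_decrease_beyond_gain:
  fixes f1 f2 :: "real^'n \<Rightarrow> real^'n" and g :: "real^'n \<Rightarrow> real^'m^'n"
    and h :: "real^'n \<Rightarrow> real^'p" and l1 l2 :: "real^'p \<Rightarrow> real^'n"
    and k :: "real^'n \<Rightarrow> real^'m" and dV :: "real^'n \<Rightarrow> real^'n"
  assumes cont: "continuous_on UNIV f1" "continuous_on UNIV f2" "continuous_on UNIV g"
      "continuous_on UNIV h" "continuous_on UNIV l1" "continuous_on UNIV l2" "continuous_on UNIV k"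
    and decr1: "\<And>x z. dV (x - z) \<bullet> (f1 x - f1 z - l1 (h x - h z) + gtilde g k x z) \<le> - \<alpha> (norm (x - z))"
    and decr2: "\<And>x z. dV (x - z) \<bullet> (f2 x - f2 z - l2 (h x - h z) + gtilde g k x z) \<le> - \<alpha> (norm (x - z))"
    and dV: "\<And>e. norm (dV e) \<le> \<rho> (norm e)" and mismatch: "\<And>x. norm (f1 x - f2 x) \<le> \<beta> (norm x)"
    and K: "class_K \<alpha>" "class_K \<rho>" "class_K \<beta>"
    and \<theta>: "class_Kinf \<theta>" "\<And>s. 0 \<le> s \<Longrightarrow> \<theta> s \<le> \<alpha> s / \<rho> s"
    and e: "inv_nonneg \<theta> (2 * \<beta> (norm x)) \<le> norm e" and fe: "fe \<in> Fe f1 f2 g q h l1 l2 k x e"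
  shows "dV e \<bullet> fe \<le> - (\<alpha> (norm e) / 2)"
proof -
  have "dV e \<bullet> fe \<le> - \<alpha> (norm e) + norm (dV e) * norm (f1 x - f2 x)"
    by (rule Fe_inner_le[OF cont decr1 decr2 fe])
  also have "norm (dV e) * norm (f1 x - f2 x) \<le> \<rho> (norm e) * \<beta> (norm x)"
    by (rule mult_mono[OF dV mismatch]) (simp_all add: class_K_nonneg[OF K(2)])
  also have "\<rho> (norm e) * \<beta> (norm x) \<le> \<alpha> (norm e) / 2"
    by (rule mismatch_le_half_decay[OF \<theta>(1) K(2) K(1) \<theta>(2) class_K_nonneg[OF K(3) norm_ge_zero] e])
  finally show ?thesis
    by simp
qed

section \<open>Decrease of a Lyapunov function along absolutely continuous curves\<close>

lemma integral_le_ae: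
  fixes f g :: "'a::euclidean_space \<Rightarrow> real"
  assumes f: "f integrable_on S" and g: "g integrable_on S"
    and N: "negligible N" and le: "\<And>x. x \<in> S - N \<Longrightarrow> f x \<le> g x"
  shows "integral S f \<le> integral S g"
proof -
  define f' where "f' x = (if x \<in> N then g x else f x)" for x
  have "integral S f = integral S f'"
    by (rule integral_spike[OF N]) (simp add: f'_def)
  also have "\<dots> \<le> integral S g"
    by (rule integral_le[OF integrable_spike[OF f N] g]) (use le in \<open>auto simp: f'_def\<close>)
  finally show ?thesis .
qed

lemma indefinite_integral_shift_base:
  fixes v :: "real \<Rightarrow> 'a::banach"
  assumes v: "v integrable_on {a..b}" and e: "\<And>r. r \<in> {a..b} \<Longrightarrow> e r = e a + integral {a..r} v"
    and "a \<le> c" "c \<le> r" "r \<le> b"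
  shows "e r = e c + integral {c..r} v"
proof -
  have "integral {a..c} v + integral {c..r} v = integral {a..r} v"
    using \<open>a \<le> c\<close> \<open>c \<le> r\<close> \<open>r \<le> b\<close> integrable_on_subinterval[OF v, of a r]
    by (intro Henstock_Kurzweil_Integration.integral_combine) auto
  moreover have "e r = e a + integral {a..r} v" "e c = e a + integral {a..c} v"
    using \<open>a \<le> c\<close> \<open>c \<le> r\<close> \<open>r \<le> b\<close> by (auto intro!: e)
  ultimately show ?thesis
    by (simp add: algebra_simps)
qed

lemma continuous_on_indefinite_integral_eq:
  fixes v :: "real \<Rightarrow> 'a::banach"
  assumes "v integrable_on {a..b}" "\<And>r. r \<in> {a..b} \<Longrightarrow> e r = e a + integral {a..r} v"
  shows "continuous_on {a..b} e"
  using continuous_on_add[OF continuous_on_const[of _ "e a"] indefinite_integral_continuous_1[OF assms(1)]]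
  by (rule continuous_on_eq) (metis assms(2))

lemma continuous_on_right_nonincreasing_imp_le:
  fixes F :: "real \<Rightarrow> real"
  assumes F: "continuous_on {a..b} F" and "a \<le> b"
    and right: "\<And>t. a \<le> t \<Longrightarrow> t < b \<Longrightarrow> \<exists>\<delta>>0. \<forall>t'. t < t' \<and> t' < t + \<delta> \<and> t' \<le> b \<longrightarrow> F t' \<le> F t"
  shows "F b \<le> F a"
proof -
  define Z where "Z = {t \<in> {a..b}. F t \<le> F a}"
  have "closed Z"
    unfolding Z_def by (rule continuous_on_closed_Collect_le[OF F continuous_on_const closed_atLeastAtMost])
  moreover have "a \<in> Z" and Z: "bdd_above Z"
    using \<open>a \<le> b\<close> by (auto simp: Z_def)
  ultimately have s: "Sup Z \<in> Z"
    using closed_contains_Sup by blast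
  have "Sup Z = b"
  proof (rule ccontr)
    assume "Sup Z \<noteq> b"
    then have "a \<le> Sup Z" "Sup Z < b"
      using s by (auto simp: Z_def)
    then obtain \<delta> where "\<delta> > 0" and \<delta>: "\<And>t'. Sup Z < t' \<Longrightarrow> t' < Sup Z + \<delta> \<Longrightarrow> t' \<le> b \<Longrightarrow> F t' \<le> F (Sup Z)"
      using right by blast
    define t' where "t' = min (Sup Z + \<delta> / 2) b"
    have "Sup Z < t'" "t' < Sup Z + \<delta>" "t' \<le> b"
      using \<open>\<delta> > 0\<close> \<open>Sup Z < b\<close> by (auto simp: t'_def)
    then have "t' \<in> Z"
      using \<delta>[of t'] s \<open>a \<le> Sup Z\<close> by (auto simp: Z_def)
    then have "t' \<le> Sup Z"
      using Z by (rule cSup_upper)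
    then show False
      using \<open>\<delta> > 0\<close> \<open>Sup Z < b\<close> by (simp add: t'_def)
  qed
  then show ?thesis
    using s by (simp add: Z_def)
qed

lemma inner_integral_le:
  fixes v w :: "real \<Rightarrow> 'a::euclidean_space"
  assumes v: "v absolutely_integrable_on {t..t'}" and "t \<le> t'" and N: "negligible N"
    and decrease: "\<And>r. r \<in> {t..t'} - N \<Longrightarrow> w r \<bullet> v r \<le> - m"
    and close: "\<And>r. r \<in> {t..t'} \<Longrightarrow> norm (D - w r) \<le> \<epsilon>"
  shows "D \<bullet> integral {t..t'} v \<le> - m * (t' - t) + \<epsilon> * integral {t..t'} (\<lambda>r. norm (v r))"
proof -
  have vi: "v integrable_on {t..t'}" and nvi: "(\<lambda>r. norm (v r)) integrable_on {t..t'}"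
    using v by (auto simp: absolutely_integrable_on_def)
  have "D \<bullet> integral {t..t'} v = integral {t..t'} (\<lambda>r. D \<bullet> v r)"
    using integral_linear[OF vi bounded_linear_inner_right[of D]] by (simp add: o_def)
  also have "\<dots> \<le> integral {t..t'} (\<lambda>r. - m + \<epsilon> * norm (v r))"
  proof (rule integral_le_ae[OF _ _ N])
    show "(\<lambda>r. D \<bullet> v r) integrable_on {t..t'}"
      using integrable_linear[OF vi bounded_linear_inner_right[of D]] by (simp add: o_def)
    show "(\<lambda>r. - m + \<epsilon> * norm (v r)) integrable_on {t..t'}"
      by (intro integrable_add integrable_const_ivl integrable_on_mult_right nvi)
  next
    fix r
    assume r: "r \<in> {t..t'} - N"
    have "norm (D - w r) * norm (v r) \<le> \<epsilon> * norm (v r)"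
      using close r by (intro mult_right_mono) auto
    then have "(D - w r) \<bullet> v r \<le> \<epsilon> * norm (v r)"
      using norm_cauchy_schwarz[of "D - w r" "v r"] by linarith
    then show "D \<bullet> v r \<le> - m + \<epsilon> * norm (v r)"
      using decrease[OF r] by (simp add: inner_diff_left)
  qed
  also have "\<dots> = integral {t..t'} (\<lambda>r. - m) + integral {t..t'} (\<lambda>r. \<epsilon> * norm (v r))"
    by (intro integral_add integrable_const_ivl integrable_on_mult_right nvi)
  also have "\<dots> = - m * (t' - t) + \<epsilon> * integral {t..t'} (\<lambda>r. norm (v r))"
    using \<open>t \<le> t'\<close> by simp
  finally show ?thesis .
qed

lemma has_derivative_local_upper_bound:
  assumes "(V has_derivative (\<lambda>w. D \<bullet> w)) (at y)" and "0 < \<epsilon>"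
  obtains d where "0 < d" "\<And>z. norm (z - y) < d \<Longrightarrow> V z - V y \<le> D \<bullet> (z - y) + \<epsilon> * norm (z - y)"
proof -
  obtain d where "0 < d" and d: "\<And>z. norm (z - y) < d \<Longrightarrow>
      \<bar>V z - V y - D \<bullet> (z - y)\<bar> \<le> \<epsilon> * norm (z - y)"
    using assms unfolding has_derivative_at_alt by auto
  show ?thesis
  proof (rule that[OF \<open>0 < d\<close>])
    fix z
    assume "norm (z - y) < d"
    then show "V z - V y \<le> D \<bullet> (z - y) + \<epsilon> * norm (z - y)"
      using d[of z] by (simp add: abs_le_iff)
  qed
qed

lemma lyapunov_local_right_estimate:
  fixes V :: "'a::euclidean_space \<Rightarrow> real" and dV :: "'a \<Rightarrow> 'a" and v e :: "real \<Rightarrow> 'a"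
  assumes V: "\<And>y. (V has_derivative (\<lambda>w. dV y \<bullet> w)) (at y)" and dV: "continuous_on UNIV dV"
    and v: "v absolutely_integrable_on {a..b}"
    and e: "\<And>r. r \<in> {a..b} \<Longrightarrow> e r = e a + integral {a..r} v"
    and N: "negligible N" and decrease: "\<And>r. r \<in> {a..b} - N \<Longrightarrow> dV (e r) \<bullet> v r \<le> - m"
    and "0 < \<epsilon>" "a \<le> t" "t < b"
  shows "\<exists>\<delta>>0. \<forall>t'. t < t' \<and> t' < t + \<delta> \<and> t' \<le> b \<longrightarrow>
           V (e t') - V (e t) \<le> - m * (t' - t) + 2 * \<epsilon> * integral {t..t'} (\<lambda>r. norm (v r))"
proof -
  have vi: "v integrable_on {a..b}"
    using v by (simp add: absolutely_integrable_on_def)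
  have ec: "continuous_on {a..b} e"
    using vi e by (rule continuous_on_indefinite_integral_eq)
  have "t \<in> {a..b}"
    using \<open>a \<le> t\<close> \<open>t < b\<close> by simp
  obtain d1 where "d1 > 0" and d1: "\<And>z. norm (z - e t) < d1 \<Longrightarrow>
      V z - V (e t) \<le> dV (e t) \<bullet> (z - e t) + \<epsilon> * norm (z - e t)"
    using has_derivative_local_upper_bound[OF V \<open>0 < \<epsilon>\<close>] by blast
  \<comment> \<open>freezing the gradient at \<open>e t\<close> costs at most \<open>\<epsilon> |v r|\<close> for \<open>r\<close> close to \<open>t\<close>\<close>
  obtain d2 where "d2 > 0" and d2: "\<And>r. r \<in> {a..b} \<Longrightarrow> dist r t < d2 \<Longrightarrow> dist (dV (e r)) (dV (e t)) < \<epsilon>"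
    using continuous_on_compose2[OF dV ec] \<open>t \<in> {a..b}\<close> \<open>0 < \<epsilon>\<close>
    unfolding continuous_on_iff by (metis subset_UNIV)
  obtain d3 where "d3 > 0" and d3: "\<And>r. r \<in> {a..b} \<Longrightarrow> dist r t < d3 \<Longrightarrow> dist (e r) (e t) < d1"
    using ec \<open>t \<in> {a..b}\<close> \<open>d1 > 0\<close> unfolding continuous_on_iff by metis
  have "V (e t') - V (e t) \<le> - m * (t' - t) + 2 * \<epsilon> * integral {t..t'} (\<lambda>r. norm (v r))"
    if t': "t < t'" "t' < t + min d2 d3" "t' \<le> b" for t'
  proof -
    have "t' < t + d2" "t' < t + d3"
      using t'(2) by auto
    have v': "v absolutely_integrable_on {t..t'}"
      by (rule absolutely_integrable_on_subinterval[OF v]) (use t' \<open>a \<le> t\<close> in auto)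
    have increment: "e t' - e t = integral {t..t'} v"
      using indefinite_integral_shift_base[OF vi e, of t t'] t' \<open>a \<le> t\<close> by simp
    have "V (e t') - V (e t) \<le> dV (e t) \<bullet> (e t' - e t) + \<epsilon> * norm (e t' - e t)"
      using d1[of "e t'"] d3[of t'] t' \<open>a \<le> t\<close> \<open>t' < t + d3\<close> by (simp add: dist_norm dist_real_def)
    also have "dV (e t) \<bullet> (e t' - e t) \<le> - m * (t' - t) + \<epsilon> * integral {t..t'} (\<lambda>r. norm (v r))"
      unfolding increment
    proof (rule inner_integral_le[OF v' _ N])
      fix r
      assume "r \<in> {t..t'} - N"
      then show "dV (e r) \<bullet> v r \<le> - m"
        using decrease \<open>a \<le> t\<close> t' by auto
    next
      fix r
      assume "r \<in> {t..t'}"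
      then show "norm (dV (e t) - dV (e r)) \<le> \<epsilon>"
        using d2[of r] \<open>a \<le> t\<close> t' \<open>t' < t + d2\<close>
        by (simp add: dist_norm dist_real_def norm_minus_commute)
    qed (use t' in simp)
    also have "\<epsilon> * norm (e t' - e t) \<le> \<epsilon> * integral {t..t'} (\<lambda>r. norm (v r))"
      unfolding increment using v' \<open>0 < \<epsilon>\<close>
      by (intro mult_left_mono integral_norm_bound_integral) (auto simp: absolutely_integrable_on_def)
    finally show ?thesis
      by simp
  qed
  then show ?thesis
    using \<open>d2 > 0\<close> \<open>d3 > 0\<close> by (intro exI[of _ "min d2 d3"]) auto
qed

lemma le_of_le_add_pos_mult:
  fixes x y c :: real
  assumes "\<And>\<epsilon>. 0 < \<epsilon> \<Longrightarrow> x \<le> y + \<epsilon> * c"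
  shows "x \<le> y"
proof (rule field_le_epsilon)
  fix \<epsilon> :: real
  assume "0 < \<epsilon>"
  then have "x \<le> y + \<epsilon> / (\<bar>c\<bar> + 1) * c"
    by (intro assms) simp
  also have "\<epsilon> / (\<bar>c\<bar> + 1) * c \<le> \<epsilon> / (\<bar>c\<bar> + 1) * (\<bar>c\<bar> + 1)"
    using \<open>0 < \<epsilon>\<close> by (intro mult_left_mono) auto
  finally show "x \<le> y + \<epsilon>"
    by simp
qed

lemma lyapunov_decrease_along_integral_curve:
  fixes V :: "'a::euclidean_space \<Rightarrow> real" and dV :: "'a \<Rightarrow> 'a" and v e :: "real \<Rightarrow> 'a"
  assumes V: "\<And>y. (V has_derivative (\<lambda>w. dV y \<bullet> w)) (at y)" and dV: "continuous_on UNIV dV"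
    and v: "v absolutely_integrable_on {a..b}"
    and e: "\<And>r. r \<in> {a..b} \<Longrightarrow> e r = e a + integral {a..r} v"
    and N: "negligible N" and decrease: "\<And>r. r \<in> {a..b} - N \<Longrightarrow> dV (e r) \<bullet> v r \<le> - m"
    and "a \<le> b"
  shows "V (e b) \<le> V (e a) - m * (b - a)"
proof -
  define G where "G t = integral {a..t} (\<lambda>r. norm (v r))" for t
  have vi: "v integrable_on {a..b}" and nvi: "(\<lambda>r. norm (v r)) integrable_on {a..b}"
    using v by (auto simp: absolutely_integrable_on_def)
  have G: "\<And>r. r \<in> {a..b} \<Longrightarrow> G r = G a + integral {a..r} (\<lambda>r. norm (v r))"
    by (simp add: G_def)
  have continuous: "continuous_on {a..b} (\<lambda>t. V (e t))" "continuous_on {a..b} G"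
    using continuous_on_compose2[OF has_derivative_continuous_on[OF V]
        continuous_on_indefinite_integral_eq[OF vi e]]
      continuous_on_indefinite_integral_eq[OF nvi G] by auto
  have approx: "V (e b) + m * (b - a) \<le> V (e a) + 2 * \<epsilon> * G b" if "0 < \<epsilon>" for \<epsilon>
  proof -
    define F where "F t = V (e t) + m * (t - a) - 2 * \<epsilon> * G t" for t
    have "F b \<le> F a"
    proof (rule continuous_on_right_nonincreasing_imp_le[OF _ \<open>a \<le> b\<close>])
      show "continuous_on {a..b} F"
        unfolding F_def by (intro continuous_intros continuous)
    next
      fix t
      assume t: "a \<le> t" "t < b"
      then obtain \<delta> where "\<delta> > 0" and \<delta>: "\<And>t'. t < t' \<Longrightarrow> t' < t + \<delta> \<Longrightarrow> t' \<le> b \<Longrightarrow>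
          V (e t') - V (e t) \<le> - m * (t' - t) + 2 * \<epsilon> * integral {t..t'} (\<lambda>r. norm (v r))"
        using lyapunov_local_right_estimate[OF V dV v e N decrease \<open>0 < \<epsilon>\<close>] by blast
      have "F t' \<le> F t" if "t < t'" "t' < t + \<delta>" "t' \<le> b" for t'
        using \<delta>[OF that] indefinite_integral_shift_base[OF nvi G, of t t'] t that
        by (simp add: F_def algebra_simps)
      then show "\<exists>\<delta>>0. \<forall>t'. t < t' \<and> t' < t + \<delta> \<and> t' \<le> b \<longrightarrow> F t' \<le> F t"
        using \<open>\<delta> > 0\<close> by blast
    qed
    then show ?thesis
      by (simp add: F_def G_def)
  qed
  then have "V (e b) + m * (b - a) \<le> V (e a)"
    using le_of_le_add_pos_mult[of "V (e b) + m * (b - a)" "V (e a)" "2 * G b"] by (simp add: ac_simps)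
  then show ?thesis
    by simp
qed

section \<open>A comparison lemma and the resulting KL bound\<close>

lemma continuous_on_last_time_le:
  fixes W :: "real \<Rightarrow> real"
  assumes W: "continuous_on {0..t} W" and "0 \<le> t" and "M < W t"
  obtains r0 where "0 \<le> r0" "r0 \<le> t" "W r0 \<le> M \<or> r0 = 0" "\<And>r. r \<in> {r0..t} \<Longrightarrow> M \<le> W r"
proof -
  define Z where "Z = {r \<in> {0..t}. W r \<le> M}"
  show ?thesis
  proof (cases "Z = {}")
    case True
    then show ?thesis
      using that[of 0] \<open>0 \<le> t\<close> by (force simp: Z_def)
  next
    case False
    have "closed Z"
      unfolding Z_def by (rule continuous_on_closed_Collect_le[OF W continuous_on_const closed_atLeastAtMost])
    moreover have Z: "bdd_above Z"
      by (auto simp: Z_def intro: bdd_aboveI[of _ t])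
    ultimately have "Sup Z \<in> Z"
      using False closed_contains_Sup by blast
    then have "0 \<le> Sup Z" "Sup Z < t" "W (Sup Z) \<le> M"
      using \<open>M < W t\<close> by (auto simp: Z_def less_le)
    have "M \<le> W r" if "Sup Z < r" "r \<le> t" for r
    proof (rule ccontr)
      assume "\<not> M \<le> W r"
      then have "r \<in> Z"
        using that \<open>0 \<le> Sup Z\<close> by (simp add: Z_def)
      then show False
        using cSup_upper[OF _ Z] that by fastforce
    qed
    then have "{Sup Z<..t} \<subseteq> {r \<in> {Sup Z..t}. M \<le> W r}"
      by auto
    moreover have "closed {r \<in> {Sup Z..t}. M \<le> W r}"
      using W \<open>0 \<le> Sup Z\<close> by (intro continuous_on_closed_Collect_le continuous_on_const closed_atLeastAtMost)
        (auto intro: continuous_on_subset)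
    ultimately have "closure {Sup Z<..t} \<subseteq> {r \<in> {Sup Z..t}. M \<le> W r}"
      by (rule closure_minimal)
    then have "M \<le> W r" if "r \<in> {Sup Z..t}" for r
      using that \<open>Sup Z < t\<close> by auto
    then show ?thesis
      using that[of "Sup Z"] \<open>0 \<le> Sup Z\<close> \<open>Sup Z < t\<close> \<open>W (Sup Z) \<le> M\<close> by simp
  qed
qed

lemma comparison_decay_bound:
  fixes W A :: "real \<Rightarrow> real"
  assumes W: "continuous_on {0..t} W" and "0 \<le> t" and A: "class_K A" and "0 \<le> u"
    and decay: "\<And>a b L. 0 \<le> a \<Longrightarrow> a \<le> b \<Longrightarrow> b \<le> t \<Longrightarrow> L0 \<le> L \<Longrightarrow>
        (\<And>r. r \<in> {a..b} \<Longrightarrow> L \<le> W r) \<Longrightarrow> W b \<le> W a - A L * (b - a)"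
    and W0: "W 0 \<le> u + t * A u"
  shows "W t \<le> max u L0"
proof (rule ccontr)
  define M where "M = max u L0"
  assume "\<not> W t \<le> max u L0"
  then have "M < W t"
    by (simp add: M_def not_le)
  \<comment> \<open>\<open>W \<ge> M\<close> on \<open>[r0, t]\<close>, so it decays there at rate \<open>A(M) \<ge> A(u)\<close>; starting from
    \<open>W(r0) \<le> M\<close>, or from \<open>W(0) \<le> u + t A(u)\<close>, it cannot end above \<open>M\<close>\<close>
  then obtain r0 where r0: "0 \<le> r0" "r0 \<le> t" "W r0 \<le> M \<or> r0 = 0"
    and above: "\<And>r. r \<in> {r0..t} \<Longrightarrow> M \<le> W r"
    using continuous_on_last_time_le[OF W \<open>0 \<le> t\<close>] by blast
  have "u \<le> M" "L0 \<le> M"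
    by (auto simp: M_def)
  then have "A u \<le> A M" "0 \<le> A M"
    using class_K_mono[OF A \<open>0 \<le> u\<close>] class_K_nonneg[OF A] \<open>0 \<le> u\<close> by auto
  have "W t \<le> W r0 - A M * (t - r0)"
    using decay[OF r0(1,2) order.refl \<open>L0 \<le> M\<close> above] .
  moreover have "0 \<le> A M * (t - r0)" "A M * t \<ge> A u * t"
    using \<open>0 \<le> A M\<close> \<open>A u \<le> A M\<close> r0 \<open>0 \<le> t\<close> by (auto intro: mult_right_mono)
  ultimately have "W t \<le> M"
    using r0(3) W0 \<open>u \<le> M\<close> by (auto simp: algebra_simps)
  then show False
    using \<open>M < W t\<close> by simp
qed

lemma class_Kinf_id_plus_cmult:
  assumes A: "class_K A" and "0 \<le> t"
  shows "class_Kinf (\<lambda>u. u + t * A u)"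
proof -
  have "strict_mono_on {0..} (\<lambda>u. u + t * A u)"
    using class_K_mono[OF A] \<open>0 \<le> t\<close> by (intro strict_mono_onI) (simp add: add_less_le_mono mult_left_mono)
  moreover have "filterlim (\<lambda>u. u + t * A u) at_top at_top"
  proof (rule filterlim_at_top_mono[OF filterlim_ident])
    show "\<forall>\<^sub>F u in at_top. u \<le> u + t * A u"
      using eventually_ge_at_top[of 0] by (rule eventually_mono) (simp add: class_K_nonneg[OF A] \<open>0 \<le> t\<close>)
  qed
  ultimately show ?thesis
    using A unfolding class_Kinf_def class_K_def by (auto intro!: continuous_intros)
qed

text \<open>While \<open>V\<close> decays at rate \<open>A(V)\<close>, \<open>comparison_decay_bound\<close> gives \<open>V(t) \<le> u\<close> with
  \<open>u + t A(u) = \<psi>u(s)\<close>, where \<open>s = |e(0)|\<close>; \<open>\<psi>l\<^sup>-\<^sup>1\<close> turns this into a bound on \<open>|e(t)|\<close>.\<close>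

definition decay_KL :: "(real \<Rightarrow> real) \<Rightarrow> (real \<Rightarrow> real) \<Rightarrow> (real \<Rightarrow> real) \<Rightarrow> real \<Rightarrow> real \<Rightarrow> real" where
  "decay_KL A \<psi>l \<psi>u s t = inv_nonneg \<psi>l (inv_nonneg (\<lambda>u. u + t * A u) (\<psi>u s))"

lemma class_K_decay_KL:
  assumes A: "class_K A" and \<psi>l: "class_Kinf \<psi>l" and \<psi>u: "class_Kinf \<psi>u" and "0 \<le> t"
  shows "class_K (\<lambda>s. decay_KL A \<psi>l \<psi>u s t)"
proof -
  have "class_K (inv_nonneg (\<lambda>u. u + t * A u))"
    using class_Kinf_class_K class_Kinf_inv_nonneg class_Kinf_id_plus_cmult A \<open>0 \<le> t\<close> by blast
  then show ?thesis
    using class_K_compose[OF class_Kinf_class_K[OF class_Kinf_inv_nonneg[OF \<psi>l]]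
        class_K_compose[OF _ class_Kinf_class_K[OF \<psi>u]]]
    unfolding decay_KL_def by blast
qed

lemma antimono_decay_KL:
  assumes A: "class_K A" and \<psi>l: "class_Kinf \<psi>l" and \<psi>u: "class_Kinf \<psi>u" and "0 \<le> s"
  shows "antimono_on {0..} (decay_KL A \<psi>l \<psi>u s)"
proof (rule monotone_onI)
  fix t1 t2 :: real
  assume t: "t1 \<in> {0..}" "t2 \<in> {0..}" "t1 \<le> t2"
  have S: "0 \<le> \<psi>u s"
    using class_K_nonneg[OF class_Kinf_class_K[OF \<psi>u] \<open>0 \<le> s\<close>] .
  have "inv_nonneg (\<lambda>u. u + t2 * A u) (\<psi>u s) \<le> inv_nonneg (\<lambda>u. u + t1 * A u) (\<psi>u s)"
    using t S class_K_nonneg[OF A]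
    by (intro inv_nonneg_antimono class_Kinf_id_plus_cmult A) (auto intro: mult_right_mono)
  moreover have "0 \<le> inv_nonneg (\<lambda>u. u + t2 * A u) (\<psi>u s)"
    using t S A by (intro inv_nonneg_nonneg class_Kinf_id_plus_cmult) auto
  ultimately show "decay_KL A \<psi>l \<psi>u s t2 \<le> decay_KL A \<psi>l \<psi>u s t1"
    unfolding decay_KL_def
    by (rule class_K_mono[OF class_Kinf_class_K[OF class_Kinf_inv_nonneg[OF \<psi>l]], rotated])
qed

lemma decay_KL_tendsto_zero:
  assumes A: "class_K A" and \<psi>l: "class_Kinf \<psi>l" and \<psi>u: "class_Kinf \<psi>u" and "0 \<le> s"
  shows "(decay_KL A \<psi>l \<psi>u s \<longlongrightarrow> 0) at_top"
proof (rule tendstoI)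
  fix \<epsilon> :: real
  assume "0 < \<epsilon>"
  have S: "0 \<le> \<psi>u s"
    using class_K_nonneg[OF class_Kinf_class_K[OF \<psi>u] \<open>0 \<le> s\<close>] .
  define c where "c = \<psi>l \<epsilon>"
  have "0 < c" "0 < A c"
    using \<open>0 < \<epsilon>\<close> class_K_pos A \<psi>l class_Kinf_class_K by (auto simp: c_def)
  \<comment> \<open>once \<open>t A(c) > \<psi>u(s)\<close>, the solution of \<open>u + t A(u) = \<psi>u(s)\<close> lies below \<open>c = \<psi>l(\<epsilon>)\<close>\<close>
  have "dist (decay_KL A \<psi>l \<psi>u s t) 0 < \<epsilon>" if "\<psi>u s / A c < t" for t
  proof -
    have "0 \<le> t"
      using that S \<open>0 < A c\<close> by (meson divide_nonneg_pos less_eq_real_def order_trans)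
    have H: "class_Kinf (\<lambda>u. u + t * A u)"
      using A \<open>0 \<le> t\<close> by (rule class_Kinf_id_plus_cmult)
    have "\<psi>u s < c + t * A c"
      using that \<open>0 < c\<close> \<open>0 < A c\<close> by (simp add: divide_less_eq mult.commute)
    then have "inv_nonneg (\<lambda>u. u + t * A u) (\<psi>u s) < c"
      using le_inv_nonneg_iff[OF H S, of c] \<open>0 < c\<close> by linarith
    then have "decay_KL A \<psi>l \<psi>u s t < \<epsilon>"
      using le_inv_nonneg_iff[OF \<psi>l, of "inv_nonneg (\<lambda>u. u + t * A u) (\<psi>u s)" \<epsilon>] \<open>0 < \<epsilon>\<close>
        inv_nonneg_nonneg[OF H S] by (auto simp: decay_KL_def c_def)
    moreover have "0 \<le> decay_KL A \<psi>l \<psi>u s t"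
      unfolding decay_KL_def by (intro inv_nonneg_nonneg \<psi>l H S)
    ultimately show ?thesis
      by simp
  qed
  with eventually_gt_at_top[of "\<psi>u s / A c"]
  show "\<forall>\<^sub>F t in at_top. dist (decay_KL A \<psi>l \<psi>u s t) 0 < \<epsilon>"
    by (rule eventually_mono)
qed

lemma class_KL_decay_KL:
  assumes "class_K A" "class_Kinf \<psi>l" "class_Kinf \<psi>u"
  shows "class_KL (decay_KL A \<psi>l \<psi>u)"
  using class_K_decay_KL[OF assms] antimono_decay_KL[OF assms] decay_KL_tendsto_zero[OF assms]
  by (simp add: class_KL_def)

section \<open>ISS-Lyapunov functions\<close>

lemma
  assumes "loc_ess_bounded x" "0 \<le> t"
  shows ess_sup_norm_nonneg: "0 \<le> ess_sup_norm x t"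
    and ess_sup_norm_less_imp_ae_bound:
      "ess_sup_norm x t < c \<Longrightarrow> \<exists>N. negligible N \<and> (\<forall>s\<in>{0..t} - N. norm (x s) \<le> c)"
proof -
  define C where "C = {c. c \<ge> 0 \<and> (\<exists>N. negligible N \<and> (\<forall>s\<in>{0..t} - N. norm (x s) \<le> c))}"
  have ess_sup: "ess_sup_norm x t = Inf C"
    by (simp add: C_def ess_sup_norm_def)
  obtain c0 N where "negligible N" "\<forall>s\<in>{0..t} - N. norm (x s) \<le> c0"
    using assms unfolding loc_ess_bounded_def by blast
  then have "max c0 0 \<in> C"
    unfolding C_def by force
  then have "C \<noteq> {}"
    by blast
  then show "0 \<le> ess_sup_norm x t"
    unfolding ess_sup by (rule cInf_greatest) (simp add: C_def)
  assume "ess_sup_norm x t < c"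
  then obtain c' where "c' \<in> C" "c' < c"
    using cInf_lessD[OF \<open>C \<noteq> {}\<close>] unfolding ess_sup by blast
  then show "\<exists>N. negligible N \<and> (\<forall>s\<in>{0..t} - N. norm (x s) \<le> c)"
    unfolding C_def by force
qed

locale ISS_Lyapunov =
  fixes F :: "'x::euclidean_space \<Rightarrow> 'a::euclidean_space \<Rightarrow> 'a set"
    and V :: "'a \<Rightarrow> real" and dV :: "'a \<Rightarrow> 'a"
    and \<psi>l \<psi>u \<alpha> \<gamma> :: "real \<Rightarrow> real"
  assumes V_has_derivative: "\<And>e. (V has_derivative (\<lambda>v. dV e \<bullet> v)) (at e)"
    and continuous_dV: "continuous_on UNIV dV"
    and class_Kinf_\<psi>l: "class_Kinf \<psi>l" and class_Kinf_\<psi>u: "class_Kinf \<psi>u"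
    and V_lower: "\<And>e. \<psi>l (norm e) \<le> V e" and V_upper: "\<And>e. V e \<le> \<psi>u (norm e)"
    and class_K_\<alpha>: "class_K \<alpha>" and class_K_\<gamma>: "class_K \<gamma>"
    and decrease: "\<And>x e v. \<gamma> (norm x) \<le> norm e \<Longrightarrow> v \<in> F x e \<Longrightarrow> dV e \<bullet> v \<le> - \<alpha> (norm e)"
begin

text \<open>While \<open>V \<ge> L\<close> we have \<open>|e| \<ge> \<psi>u\<^sup>-\<^sup>1(L)\<close>, so \<open>V\<close> decreases at least at this rate.\<close>
definition rate :: "real \<Rightarrow> real" where
  "rate L = \<alpha> (inv_nonneg \<psi>u L)"

lemma class_K_rate: "class_K rate"
  using class_K_compose[OF class_K_\<alpha> class_Kinf_class_K[OF class_Kinf_inv_nonneg[OF class_Kinf_\<psi>u]]]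
  by (simp add: rate_def[abs_def])

lemma decrease_above_level:
  assumes "norm x \<le> c" "0 \<le> c" "\<psi>u (\<gamma> c) \<le> L" "L \<le> V e" "v \<in> F x e"
  shows "dV e \<bullet> v \<le> - rate L"
proof -
  have "0 \<le> \<gamma> c"
    using class_K_nonneg[OF class_K_\<gamma> \<open>0 \<le> c\<close>] .
  then have "0 \<le> L"
    using assms(3) class_K_nonneg[OF class_Kinf_class_K[OF class_Kinf_\<psi>u]] by (meson order_trans)
  have "inv_nonneg \<psi>u L \<le> norm e"
    using assms(4) V_upper[of e] inv_nonneg_le_iff[OF class_Kinf_\<psi>u \<open>0 \<le> L\<close>] by auto
  moreover have "\<gamma> (norm x) \<le> inv_nonneg \<psi>u L"
  proof -
    have "\<gamma> (norm x) \<le> \<gamma> c"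
      using assms(1) by (intro class_K_mono[OF class_K_\<gamma>]) auto
    also have "\<gamma> c = inv_nonneg \<psi>u (\<psi>u (\<gamma> c))"
      using inv_nonneg_class_Kinf_eq[OF class_Kinf_\<psi>u \<open>0 \<le> \<gamma> c\<close>] by simp
    also have "\<dots> \<le> inv_nonneg \<psi>u L"
      using assms(3) \<open>0 \<le> \<gamma> c\<close> class_K_nonneg[OF class_Kinf_class_K[OF class_Kinf_\<psi>u]]
      by (intro class_K_mono[OF class_Kinf_class_K[OF class_Kinf_inv_nonneg[OF class_Kinf_\<psi>u]]]) auto
    finally show ?thesis .
  qed
  ultimately have "dV e \<bullet> v \<le> - \<alpha> (norm e)"
    using assms(5) by (intro decrease) auto
  moreover have "rate L \<le> \<alpha> (norm e)"
    unfolding rate_def using \<open>inv_nonneg \<psi>u L \<le> norm e\<close> inv_nonneg_nonneg[OF class_Kinf_\<psi>u \<open>0 \<le> L\<close>]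
    by (rule class_K_mono[OF class_K_\<alpha>, rotated])
  ultimately show ?thesis
    by simp
qed

lemma decay_above_level:
  assumes sol: "carath_solution F x T e" and "t \<le> T"
    and N': "negligible N'" and x_le: "\<And>s. s \<in> {0..t} - N' \<Longrightarrow> norm (x s) \<le> c" and "0 \<le> c"
    and ab: "0 \<le> a" "a \<le> b" "b \<le> t"
    and L: "\<psi>u (\<gamma> c) \<le> L" and above: "\<And>r. r \<in> {a..b} \<Longrightarrow> L \<le> V (e r)"
  shows "V (e b) \<le> V (e a) - rate L * (b - a)"
proof -
  obtain v N where v: "v absolutely_integrable_on {0..T}"
    and e: "\<And>r. r \<in> {0..T} \<Longrightarrow> e r = e 0 + integral {0..r} v"
    and N: "negligible N" and v_F: "\<And>r. r \<in> {0..T} - N \<Longrightarrow> v r \<in> F (x r) (e r)"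
    using sol unfolding carath_solution_def by blast
  show ?thesis
  proof (rule lyapunov_decrease_along_integral_curve[OF V_has_derivative continuous_dV _ _
        negligible_Un[OF N N'] _ \<open>a \<le> b\<close>])
    show "v absolutely_integrable_on {a..b}"
      by (rule absolutely_integrable_on_subinterval[OF v]) (use ab \<open>t \<le> T\<close> in auto)
    show "e r = e a + integral {a..r} v" if "r \<in> {a..b}" for r
      using v ab \<open>t \<le> T\<close> that
      by (intro indefinite_integral_shift_base[OF _ e]) (auto simp: absolutely_integrable_on_def)
  next
    fix r
    assume "r \<in> {a..b} - (N \<union> N')"
    then show "dV (e r) \<bullet> v r \<le> - rate L"
      using ab \<open>t \<le> T\<close> by (intro decrease_above_level[OF _ \<open>0 \<le> c\<close> L above v_F] x_le) auto
  qed
qed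

lemma solution_norm_bound:
  assumes sol: "carath_solution F x T e" and "0 \<le> t" "t \<le> T"
    and N': "negligible N'" and x_le: "\<And>s. s \<in> {0..t} - N' \<Longrightarrow> norm (x s) \<le> c" and "0 \<le> c"
  shows "norm (e t) \<le> decay_KL rate \<psi>l \<psi>u (norm (e 0)) t + inv_nonneg \<psi>l (\<psi>u (\<gamma> c))"
proof -
  obtain v where v: "v integrable_on {0..T}" and e: "\<And>r. r \<in> {0..T} \<Longrightarrow> e r = e 0 + integral {0..r} v"
    using sol unfolding carath_solution_def absolutely_integrable_on_def by blast
  have "continuous_on {0..t} (\<lambda>r. V (e r))"
    using continuous_on_compose2[OF has_derivative_continuous_on[OF V_has_derivative]
        continuous_on_indefinite_integral_eq[OF v e]] \<open>t \<le> T\<close>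
    by (auto intro: continuous_on_subset)
  have \<psi>u: "class_K \<psi>u"
    using class_Kinf_\<psi>u by (rule class_Kinf_class_K)
  define u where "u = inv_nonneg (\<lambda>u. u + t * rate u) (\<psi>u (norm (e 0)))"
  define L0 where "L0 = \<psi>u (\<gamma> c)"
  have "0 \<le> \<psi>u (norm (e 0))" "0 \<le> L0"
    using class_K_nonneg[OF \<psi>u] class_K_nonneg[OF class_K_\<gamma> \<open>0 \<le> c\<close>] by (auto simp: L0_def)
  then have u: "0 \<le> u" "u + t * rate u = \<psi>u (norm (e 0))"
    using inv_nonneg_nonneg class_Kinf_inv_nonneg_eq[OF class_Kinf_id_plus_cmult[OF class_K_rate \<open>0 \<le> t\<close>]]
      class_Kinf_id_plus_cmult[OF class_K_rate \<open>0 \<le> t\<close>]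
    by (auto simp: u_def)
  have "V (e t) \<le> max u L0"
  proof (rule comparison_decay_bound[OF \<open>continuous_on {0..t} _\<close> \<open>0 \<le> t\<close> class_K_rate \<open>0 \<le> u\<close>])
    show "V (e b) \<le> V (e a) - rate L * (b - a)"
      if "0 \<le> a" "a \<le> b" "b \<le> t" "L0 \<le> L" "\<And>r. r \<in> {a..b} \<Longrightarrow> L \<le> V (e r)" for a b L
      using that by (intro decay_above_level[OF sol \<open>t \<le> T\<close> N' x_le \<open>0 \<le> c\<close>]) (auto simp: L0_def)
    show "V (e 0) \<le> u + t * rate u"
      using u V_upper by simp
  qed
  then have "norm (e t) \<le> inv_nonneg \<psi>l (max u L0)"
    using V_lower[of "e t"] le_inv_nonneg_iff[OF class_Kinf_\<psi>l, of "max u L0" "norm (e t)"] \<open>0 \<le> u\<close>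
    by simp
  also have "\<dots> \<le> inv_nonneg \<psi>l u + inv_nonneg \<psi>l L0"
    using inv_nonneg_nonneg[OF class_Kinf_\<psi>l \<open>0 \<le> u\<close>] inv_nonneg_nonneg[OF class_Kinf_\<psi>l \<open>0 \<le> L0\<close>]
    by (simp add: max_def)
  finally show ?thesis
    by (simp add: decay_KL_def u_def L0_def)
qed

theorem input_to_state_stable: "ISS_wrt_input F"
proof -
  define gain where "gain c = inv_nonneg \<psi>l (\<psi>u (\<gamma> c))" for c
  have gain: "class_K gain"
    unfolding gain_def
    by (intro class_K_compose[OF class_Kinf_class_K[OF class_Kinf_inv_nonneg[OF class_Kinf_\<psi>l]]]
        class_K_compose[OF class_Kinf_class_K[OF class_Kinf_\<psi>u] class_K_\<gamma>])
  have "norm (e t) \<le> decay_KL rate \<psi>l \<psi>u (norm (e 0)) t + gain (ess_sup_norm x t)"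
    if x: "loc_ess_bounded x" and sol: "carath_solution F x T e" and t: "t \<in> {0..T}"
    for x :: "real \<Rightarrow> 'x" and T e t
  proof -
    define w where "w = ess_sup_norm x t"
    have "0 \<le> w"
      unfolding w_def using x t by (simp add: ess_sup_norm_nonneg)
    \<comment> \<open>the input is bounded a.e. by every \<open>c > w\<close> but possibly not by \<open>w\<close> itself\<close>
    have "\<forall>\<^sub>F c in at_right w. norm (e t) - decay_KL rate \<psi>l \<psi>u (norm (e 0)) t \<le> gain c"
      using eventually_at_right_less
    proof (rule eventually_mono)
      fix c
      assume "w < c"
      then obtain N where N: "negligible N" and x_le: "\<And>s. s \<in> {0..t} - N \<Longrightarrow> norm (x s) \<le> c"
        using ess_sup_norm_less_imp_ae_bound[OF x, of t c] t unfolding w_def by auto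
      have "norm (e t) \<le> decay_KL rate \<psi>l \<psi>u (norm (e 0)) t + gain c"
        unfolding gain_def by (rule solution_norm_bound[OF sol _ _ N x_le]) (use t \<open>0 \<le> w\<close> \<open>w < c\<close> in auto)
      then show "norm (e t) - decay_KL rate \<psi>l \<psi>u (norm (e 0)) t \<le> gain c"
        by simp
    qed
    moreover have "(gain \<longlongrightarrow> gain w) (at_right w)"
      using gain \<open>0 \<le> w\<close> unfolding class_K_def continuous_on_def
      by (auto intro: tendsto_within_subset)
    ultimately have "norm (e t) - decay_KL rate \<psi>l \<psi>u (norm (e 0)) t \<le> gain w"
      using tendsto_lowerbound trivial_limit_at_right_real by blast
    then show ?thesis
      by (simp add: w_def)
  qed
  then show ?thesis
    unfolding ISS_wrt_input_def
    using class_KL_decay_KL[OF class_K_rate class_Kinf_\<psi>l class_Kinf_\<psi>u] gain by blast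
qed

end

section \<open>The error system\<close>

lemma C1_map_imp_continuous_on:
  assumes "C1_map f"
  shows "continuous_on UNIV f"
proof -
  obtain f' where "\<And>x. (f has_derivative blinfun_apply (f' x)) (at x)"
    using assms unfolding C1_map_def by blast
  then show ?thesis
    by (intro has_derivative_continuous_on) auto
qed

theorem proposition6:
  fixes f1 f2 :: "real^'n \<Rightarrow> real^'n"
    and g :: "real^'n \<Rightarrow> real^'m^'n"
    and h :: "real^'n \<Rightarrow> real^'p"
    and q :: "real^'n \<Rightarrow> real"
    and l1 l2 :: "real^'p \<Rightarrow> real^'n"
    and k :: "real^'n \<Rightarrow> real^'m"
    and Ve :: "real^'n \<Rightarrow> real"
    and dVe :: "real^'n \<Rightarrow> real^'n"
    and \<beta>g \<beta>f psil psiu \<alpha>e \<rho>e \<theta>e :: "real \<Rightarrow> real"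
  assumes f1: "C1_map f1" and f2: "C1_map f2" and g: "C1_map g" and h: "C1_map h" and q: "C1_map q"
    and partition: "proper_partition {1::nat, 2} (\<lambda>i. if i = 1 then {x. q x \<ge> 0} else {x. q x \<le> 0}) (\<lambda>i. UNIV)"
    and f1_0: "q 0 \<ge> 0 \<Longrightarrow> f1 0 = 0"
    and f2_0: "q 0 \<le> 0 \<Longrightarrow> f2 0 = 0"
    and \<beta>g: "continuous_on UNIV \<beta>g" "\<forall>s. \<beta>g s \<ge> 0" "\<forall>x. onorm (\<lambda>u. g x *v u) \<le> \<beta>g (norm x)"
    and \<beta>f: "class_Kinf \<beta>f" "\<forall>x. norm (f1 x - f2 x) \<le> \<beta>f (norm x)"
    and l1: "C1_map l1" and l2: "C1_map l2"
    and k: "\<exists>L. L-lipschitz_on UNIV k"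
    and Ve_C1: "\<forall>e. (Ve has_derivative (\<lambda>v. dVe e \<bullet> v)) (at e)" "continuous_on UNIV dVe"
    and K: "class_Kinf psil" "class_Kinf psiu" "class_Kinf \<alpha>e" "class_Kinf \<rho>e"
    and sandwich: "\<forall>e. psil (norm e) \<le> Ve e \<and> Ve e \<le> psiu (norm e)"
    and grad_bound: "\<forall>e. norm (dVe e) \<le> \<rho>e (norm e)"
    and decr1: "\<forall>x z. dVe (x - z) \<bullet> (f1 x - f1 z - l1 (h x - h z) + gtilde g k x z) \<le> - \<alpha>e (norm (x - z))"
    and decr2: "\<forall>x z. dVe (x - z) \<bullet> (f2 x - f2 z - l2 (h x - h z) + gtilde g k x z) \<le> - \<alpha>e (norm (x - z))"
    and \<theta>e: "class_Kinf \<theta>e" "\<forall>s\<ge>0. \<theta>e s \<le> \<alpha>e s / \<rho>e s"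
  shows "(\<exists>\<gamma> \<alpha>. class_K \<gamma> \<and> class_Kinf \<alpha> \<and>
            (\<forall>x e. norm e \<ge> \<gamma> (norm x) \<longrightarrow>
               (\<forall>fe\<in>Fe f1 f2 g q h l1 l2 k x e. dVe e \<bullet> fe \<le> - \<alpha> (norm e))))
       \<and> ISS_wrt_input (Fe f1 f2 g q h l1 l2 k)"
proof -
  define \<gamma> where "\<gamma> s = inv_nonneg \<theta>e (2 * \<beta>f s)" for s
  define \<alpha> where "\<alpha> s = 1 / 2 * \<alpha>e s" for s
  obtain Lk where "Lk-lipschitz_on UNIV k"
    using k by blast
  note continuous = f1 [THEN C1_map_imp_continuous_on] f2 [THEN C1_map_imp_continuous_on]
    g [THEN C1_map_imp_continuous_on] h [THEN C1_map_imp_continuous_on]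
    l1 [THEN C1_map_imp_continuous_on] l2 [THEN C1_map_imp_continuous_on]
    lipschitz_on_continuous_on[OF this]
  have decrease: "dVe e \<bullet> fe \<le> - \<alpha> (norm e)"
    if "\<gamma> (norm x) \<le> norm e" "fe \<in> Fe f1 f2 g q h l1 l2 k x e" for x e fe
    using Fe_decrease_beyond_gain[OF continuous decr1[rule_format] decr2[rule_format]
        grad_bound[rule_format] \<beta>f(2)[rule_format] K(3,4)[THEN class_Kinf_class_K]
        \<beta>f(1)[THEN class_Kinf_class_K] \<theta>e(1) \<theta>e(2)[rule_format]] that
    by (simp add: \<gamma>_def \<alpha>_def)
  have \<gamma>: "class_K \<gamma>"
    unfolding \<gamma>_def
    using class_K_compose[OF class_Kinf_class_K[OF class_Kinf_inv_nonneg[OF \<theta>e(1)]]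
        class_K_cmult[OF class_Kinf_class_K[OF \<beta>f(1)], of 2]] by simp
  have \<alpha>: "class_Kinf \<alpha>"
    unfolding \<alpha>_def using class_Kinf_cmult[OF K(3), of "1 / 2"] by simp
  interpret ISS_Lyapunov "Fe f1 f2 g q h l1 l2 k" Ve dVe psil psiu \<alpha> \<gamma>
    using Ve_C1 K(1,2) sandwich decrease \<gamma> \<alpha>[THEN class_Kinf_class_K] by unfold_locales auto
  show ?thesis
    using \<gamma> \<alpha> decrease input_to_state_stable by blast
qed

end
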